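(* Fix $n\in\mathbb{N}$ and $s\in(0,1)$. Suppose that for every $i>2$ the jump kernels satisfy $\lambda_i|x-y|^{-1-2s}\le j_i^{(n)}(x,y)\le\Lambda_i|x-y|^{-1-2s}$ for all $n\ge0$ and all wires $\{x,y\}\in W_i^{(n)}$, with $0<\lambda_i\le\Lambda_i<\infty$, $\lim_{i\to\infty}\lambda_i/i^2=1$ and $\lim_{i\to\infty}\Lambda_i/i^2=1$. If $u$ is a continuous real function on $\overline{V}_{i_0}^*$ for some $i_0>2$, then $$\lim_{i\to\infty}\mathcal{E}_i^{(n)}(u|_{V_i^{(n)}})=2|u(0)-u(1)|^2.$$
   Context: Index graph: vertices $\mathbb{N}$; vertex $i$ has edges $e_{i,2i-2}$ to $2i-2$ (only if $i\ge2$), $e_{i,2i-1},e'_{i,2i-1}$ to $2i-1$, $e_{i,2i}$ to $2i$, weights $r_e>0$ with $r_{e_{i,2i-1}}=r_{e'_{i,2i-1}}$. For $e$ from $i$ to $j$, $\phi_e(x)=\frac{j}{2i}x+s_e$, $s_e=0$ for $e\in\{e_{i,2i-1},e_{i,2i}\}$, $s_e=\frac1{2i}$ for $e\in\{e_{i,2i-2},e'_{i,2i-1}\}$. $E_i^{(n)}$: paths $\sigma=e_1\cdots e_n$ of length $n$ from $i$; $\phi_\sigma=\phi_{e_1}\circ\cdots\circ\phi_{e_n}$, $\delta_\sigma=r_{e_1}\cdots r_{e_n}$. For $i>1$: $V_{i-}^{(n)}=\{k/(i2^n)\}_{k=0}^{2^n-1}$, $V_{i+}^{(n)}=\{1-k/(i2^n)\}_{k=0}^{2^n-1}$,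 $V_i^{(n)}=V_{i-}^{(n)}\cup V_{i+}^{(n)}$, $\overline{V}_i^*=[0,\frac1i]\cup[1-\frac1i,1]$ (so $V_i^{(n)}\subset\overline{V}_{i_0}^*$ for $i\ge i_0$). Wires $W_i^{(n)}=\{\{\phi_\sigma(0),\phi_\sigma(1)\}:\sigma\in E_i^{(n)}\}$ are all pairs $\{x,y\}$ with $x\in V_{i-}^{(n)},y\in V_{i+}^{(n)}$, each with a unique path $\sigma^{(n)}_{x,y}$. $\mu_i^{(n)}(x)=\frac1{i2^n}$. Kernel $j_i^{(n)}(x,y)=(\delta_{\sigma^{(n)}_{x,y}}\mu_i^{(n)}(x)\mu_i^{(n)}(y))^{-1}$ on wires, $0$ otherwise. $\mathcal{E}_i^{(n)}(v)=\sum_{x,y\in V_i^{(n)}}(v(x)-v(y))^2j_i^{(n)}(x,y)\mu_i^{(n)}(x)\mu_i^{(n)}(y)$ for $v:V_i^{(n)}\to\mathbb{R}$. *)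

theory Defs
  imports Complex_Main
begin

text \<open>Edges out of vertex i of the index graph, by kind:
  EL = e_{i,2i-2} (only if i >= 2), EM = e_{i,2i-1}, EM' = e'_{i,2i-1}, ER = e_{i,2i}.
  An edge is the pair (source vertex, kind).\<close>
datatype ekind = EL | EM | EM' | ER

fun etarget :: "nat \<Rightarrow> ekind \<Rightarrow> nat" where
  "etarget i EL = 2*i - 2"
| "etarget i EM = 2*i - 1"
| "etarget i EM' = 2*i - 1"
| "etarget i ER = 2*i"

fun eshift :: "nat \<Rightarrow> ekind \<Rightarrow> real" where
  "eshift i EL = 1 / (2 * real i)"
| "eshift i EM = 0"
| "eshift i EM' = 1 / (2 * real i)"
| "eshift i ER = 0"

definition ephi :: "nat \<Rightarrow> ekind \<Rightarrow> real \<Rightarrow> real" where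
  "ephi i k x = real (etarget i k) / (2 * real i) * x + eshift i k"

fun valid_path :: "nat \<Rightarrow> ekind list \<Rightarrow> bool" where
  "valid_path i [] = True"
| "valid_path i (k # ks) = ((k = EL \<longrightarrow> i \<ge> 2) \<and> valid_path (etarget i k) ks)"

definition paths :: "nat \<Rightarrow> nat \<Rightarrow> ekind list set" where
  "paths i n = {\<sigma>. valid_path i \<sigma> \<and> length \<sigma> = n}"

fun path_phi :: "nat \<Rightarrow> ekind list \<Rightarrow> real \<Rightarrow> real" where
  "path_phi i [] x = x"
| "path_phi i (k # ks) x = ephi i k (path_phi (etarget i k) ks x)"

fun path_delta :: "(nat \<Rightarrow> ekind \<Rightarrow> real) \<Rightarrow> nat \<Rightarrow> ekind list \<Rightarrow> real" where
  "path_delta r i [] = 1"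
| "path_delta r i (k # ks) = r i k * path_delta r (etarget i k) ks"

definition admissible_weights :: "(nat \<Rightarrow> ekind \<Rightarrow> real) \<Rightarrow> bool" where
  "admissible_weights r \<longleftrightarrow> (\<forall>i k. r i k > 0) \<and> (\<forall>i. r i EM = r i EM')"

definition Vminus :: "nat \<Rightarrow> nat \<Rightarrow> real set" where
  "Vminus i n = {real k / (real i * 2 ^ n) | k. k < 2 ^ n}"

definition Vplus :: "nat \<Rightarrow> nat \<Rightarrow> real set" where
  "Vplus i n = {1 - real k / (real i * 2 ^ n) | k. k < 2 ^ n}"

definition V :: "nat \<Rightarrow> nat \<Rightarrow> real set" where
  "V i n = Vminus i n \<union> Vplus i n"

definition Vbar :: "nat \<Rightarrow> real set" where
  "Vbar i = {0 .. 1 / real i} \<union> {1 - 1 / real i .. 1}"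

definition wires :: "nat \<Rightarrow> nat \<Rightarrow> real set set" where
  "wires i n = {{path_phi i \<sigma> 0, path_phi i \<sigma> 1} | \<sigma>. \<sigma> \<in> paths i n}"

definition wire_path :: "nat \<Rightarrow> nat \<Rightarrow> real \<Rightarrow> real \<Rightarrow> ekind list" where
  "wire_path i n x y = (THE \<sigma>. \<sigma> \<in> paths i n \<and> {path_phi i \<sigma> 0, path_phi i \<sigma> 1} = {x, y})"

definition mu :: "nat \<Rightarrow> nat \<Rightarrow> real" where
  "mu i n = 1 / (real i * 2 ^ n)"

definition jker :: "(nat \<Rightarrow> ekind \<Rightarrow> real) \<Rightarrow> nat \<Rightarrow> nat \<Rightarrow> real \<Rightarrow> real \<Rightarrow> real" where
  "jker r i n x y = (if {x, y} \<in> wires i n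
      then 1 / (path_delta r i (wire_path i n x y) * mu i n * mu i n) else 0)"

definition energy :: "(nat \<Rightarrow> ekind \<Rightarrow> real) \<Rightarrow> nat \<Rightarrow> nat \<Rightarrow> (real \<Rightarrow> real) \<Rightarrow> real" where
  "energy r i n v = (\<Sum>x\<in>V i n. \<Sum>y\<in>V i n. (v x - v y)^2 * jker r i n x y * mu i n * mu i n)"

end

theory Submission
  imports Defs
begin

(* A path of length n from i >= 2 is the binary expansion of a pair (a, b) with a, b < 2^n:
   each edge kind contributes one digit to a and one to b, and phi_sigma maps 0 to a/(i 2^n)
   in V_{i-} and 1 to 1 - b/(i 2^n) in V_{i+}.  So the level-n wires are exactly the 4^n pairs
   between V_{i-} and V_{i+}, which are disjoint for i > 2, and the energy is twice a sum of
   4^n terms.  As i tends to infinity the endpoints tend to 0 and 1, hence |x - y|^(-1-2s)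
   tends to 1 and the kernel bounds squeeze j mu^2 = j / (i^2 4^n) to 4^(-n); by continuity
   of u each term tends to |u 0 - u 1|^2 / 4^n.  Neither s nor the weights r play any role. *)

fun left_digit :: "ekind \<Rightarrow> nat" where
  "left_digit EL = 1"
| "left_digit EM = 0"
| "left_digit EM' = 1"
| "left_digit ER = 0"

fun right_digit :: "ekind \<Rightarrow> nat" where
  "right_digit EL = 1"
| "right_digit EM = 1"
| "right_digit EM' = 0"
| "right_digit ER = 0"

fun left_index :: "ekind list \<Rightarrow> nat" where
  "left_index [] = 0"
| "left_index (k # ks) = left_index ks + left_digit k * 2 ^ length ks"

fun right_index :: "ekind list \<Rightarrow> nat" where
  "right_index [] = 0"
| "right_index (k # ks) = right_index ks + right_digit k * 2 ^ length ks"

definition left_point :: "nat \<Rightarrow> nat \<Rightarrow> nat \<Rightarrow> real" where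
  "left_point i n a = real a / (real i * 2 ^ n)"

definition right_point :: "nat \<Rightarrow> nat \<Rightarrow> nat \<Rightarrow> real" where
  "right_point i n b = 1 - real b / (real i * 2 ^ n)"

lemma etarget_ge_2: "i \<ge> 2 \<Longrightarrow> etarget i k \<ge> 2"
  by (cases k) auto

lemma valid_path_if_ge_2: "i \<ge> 2 \<Longrightarrow> valid_path i \<sigma>"
  by (induction \<sigma> arbitrary: i) (auto simp: etarget_ge_2)

lemma ephi_left_point:
  assumes "i \<ge> 2"
  shows "ephi i k (left_point (etarget i k) m a) = left_point i (Suc m) (a + left_digit k * 2 ^ m)"
proof -
  have "real (etarget i k) > 0" using etarget_ge_2[OF assms, of k] by simp
  then show ?thesis using assms by (cases k) (simp_all add: ephi_def left_point_def field_simps)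
qed

lemma ephi_right_point:
  assumes "i \<ge> 2"
  shows "ephi i k (right_point (etarget i k) m b) = right_point i (Suc m) (b + right_digit k * 2 ^ m)"
proof -
  have "real (etarget i k) > 0" using etarget_ge_2[OF assms, of k] by simp
  then show ?thesis using assms by (cases k) (simp_all add: ephi_def right_point_def field_simps of_nat_diff)
qed

lemma path_phi_0: "i \<ge> 2 \<Longrightarrow> path_phi i \<sigma> 0 = left_point i (length \<sigma>) (left_index \<sigma>)"
proof (induction \<sigma> arbitrary: i)
  case Nil
  then show ?case by (simp add: left_point_def)
next
  case (Cons k ks)
  then show ?case by (simp add: etarget_ge_2 ephi_left_point)
qed

lemma path_phi_1: "i \<ge> 2 \<Longrightarrow> path_phi i \<sigma> 1 = right_point i (length \<sigma>) (right_index \<sigma>)"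
proof (induction \<sigma> arbitrary: i)
  case Nil
  then show ?case by (simp add: right_point_def)
next
  case (Cons k ks)
  then show ?case by (simp add: etarget_ge_2 ephi_right_point)
qed

lemma left_index_less: "left_index \<sigma> < 2 ^ length \<sigma>"
proof (induction \<sigma>)
  case (Cons k ks)
  then show ?case by (cases k) simp_all
qed simp

lemma right_index_less: "right_index \<sigma> < 2 ^ length \<sigma>"
proof (induction \<sigma>)
  case (Cons k ks)
  then show ?case by (cases k) simp_all
qed simp

lemma digits_surj:
  assumes "p < 2" "q < 2"
  shows "\<exists>k. left_digit k = p \<and> right_digit k = q"
proof -
  have "p \<in> {0, 1}" "q \<in> {0, 1}" using assms by auto
  then show ?thesis by auto (metis left_digit.simps right_digit.simps One_nat_def)+
qed

lemma indices_surj: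
  "a < 2 ^ m \<Longrightarrow> b < 2 ^ m \<Longrightarrow> \<exists>\<sigma>. length \<sigma> = m \<and> left_index \<sigma> = a \<and> right_index \<sigma> = b"
proof (induction m arbitrary: a b)
  case 0
  then show ?case by simp
next
  case (Suc m)
  obtain k where k: "left_digit k = a div 2 ^ m" "right_digit k = b div 2 ^ m"
    using digits_surj less_mult_imp_div_less Suc.prems by (metis power_Suc)
  obtain ks where "length ks = m" "left_index ks = a mod 2 ^ m" "right_index ks = b mod 2 ^ m"
    using Suc.IH[of "a mod 2 ^ m" "b mod 2 ^ m"] by auto
  then show ?case using k by (intro exI[of _ "k # ks"]) (simp add: mod_div_mult_eq)
qed

lemma wires_eq:
  assumes "i \<ge> 2"
  shows "wires i n = {{left_point i n a, right_point i n b} | a b. a < 2 ^ n \<and> b < 2 ^ n}"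
proof -
  have "{x, y} \<in> wires i n" if "a < 2 ^ n" "b < 2 ^ n" "{x, y} = {left_point i n a, right_point i n b}"
    for x y a b
    using indices_surj[OF that(1,2)] valid_path_if_ge_2[OF assms] that(3)
    by (auto simp: wires_def paths_def path_phi_0[OF assms] path_phi_1[OF assms])
  moreover have "\<exists>a b. {path_phi i \<sigma> 0, path_phi i \<sigma> 1} = {left_point i n a, right_point i n b}
      \<and> a < 2 ^ n \<and> b < 2 ^ n" if "length \<sigma> = n" for \<sigma>
    using left_index_less right_index_less that
    by (auto simp: path_phi_0[OF assms] path_phi_1[OF assms])
  ultimately show ?thesis
    by (auto simp: wires_def paths_def valid_path_if_ge_2[OF assms])
qed

lemma Vminus_eq: "Vminus i n = left_point i n ` {..<2 ^ n}"
  unfolding Vminus_def left_point_def by auto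

lemma Vplus_eq: "Vplus i n = right_point i n ` {..<2 ^ n}"
  unfolding Vplus_def right_point_def by auto

lemma inj_on_left_point: "i > 0 \<Longrightarrow> inj_on (left_point i n) A"
  by (auto simp: inj_on_def left_point_def)

lemma inj_on_right_point: "i > 0 \<Longrightarrow> inj_on (right_point i n) A"
  by (auto simp: inj_on_def right_point_def)

lemma left_point_bounds:
  assumes "i > 0" "a < 2 ^ n"
  shows "0 \<le> left_point i n a" "left_point i n a < 1 / real i"
proof -
  have "real a < 2 ^ n" using assms(2) by (metis of_nat_less_iff of_nat_numeral of_nat_power)
  then show "0 \<le> left_point i n a" "left_point i n a < 1 / real i"
    using assms(1) by (simp_all add: left_point_def field_simps)
qed

lemma right_point_bounds:
  assumes "i > 0" "b < 2 ^ n"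
  shows "1 - 1 / real i < right_point i n b" "right_point i n b \<le> 1"
  using left_point_bounds[OF assms] by (simp_all add: right_point_def left_point_def)

lemma left_point_less_right_point:
  assumes "i > 2" "a < 2 ^ n" "b < 2 ^ n"
  shows "left_point i n a < right_point i n b"
proof -
  have "1 / real i < 1 - 1 / real i" using assms(1) by (simp add: field_simps)
  moreover have "left_point i n a < 1 / real i" using left_point_bounds(2) assms by simp
  moreover have "1 - 1 / real i < right_point i n b" using right_point_bounds(1) assms by simp
  ultimately show ?thesis by linarith
qed

lemma Vminus_Vplus_disjoint: "i > 2 \<Longrightarrow> Vminus i n \<inter> Vplus i n = {}"
  using left_point_less_right_point by (fastforce simp: Vminus_eq Vplus_eq)

lemma sum_sum_union_bipartite:
  fixes g :: "'a \<Rightarrow> 'a \<Rightarrow> 'b :: comm_semiring_1"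
  assumes "finite A" "finite B" "A \<inter> B = {}"
    and "\<And>x y. g x y = g y x"
    and "\<And>x y. x \<in> A \<Longrightarrow> y \<in> A \<Longrightarrow> g x y = 0"
    and "\<And>x y. x \<in> B \<Longrightarrow> y \<in> B \<Longrightarrow> g x y = 0"
  shows "(\<Sum>x\<in>A \<union> B. \<Sum>y\<in>A \<union> B. g x y) = 2 * (\<Sum>x\<in>A. \<Sum>y\<in>B. g x y)"
proof -
  have "(\<Sum>x\<in>A \<union> B. \<Sum>y\<in>A \<union> B. g x y) = (\<Sum>x\<in>A. \<Sum>y\<in>B. g x y) + (\<Sum>x\<in>B. \<Sum>y\<in>A. g x y)"
    using assms(1-3,5,6) by (simp add: sum.union_disjoint sum.distrib add.commute)
  also have "(\<Sum>x\<in>B. \<Sum>y\<in>A. g x y) = (\<Sum>x\<in>A. \<Sum>y\<in>B. g x y)"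
    by (subst sum.swap) (simp add: assms(4))
  finally show ?thesis by (simp add: mult_2)
qed

lemma jker_commute: "jker r i n x y = jker r i n y x"
  unfolding jker_def wire_path_def by (simp add: insert_commute)

lemma energy_eq_wire_sum:
  assumes i: "i > 2"
  shows "energy r i n u = 2 * (\<Sum>a<2 ^ n. \<Sum>b<2 ^ n.
    (u (left_point i n a) - u (right_point i n b))^2
      * jker r i n (left_point i n a) (right_point i n b) * mu i n * mu i n)"
proof -
  define g where "g x y = (u x - u y)^2 * jker r i n x y * mu i n * mu i n" for x y
  have no_wire: "{x, y} \<notin> wires i n"
    if "x \<in> Vminus i n \<and> y \<in> Vminus i n \<or> x \<in> Vplus i n \<and> y \<in> Vplus i n" for x y
  proof
    assume "{x, y} \<in> wires i n"
    then obtain a b where "a < 2 ^ n" "b < 2 ^ n" "{x, y} = {left_point i n a, right_point i n b}"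
      using wires_eq[of i n] i by auto
    then have "left_point i n a \<in> Vminus i n" "right_point i n b \<in> Vplus i n"
      and "left_point i n a \<in> Vplus i n \<or> right_point i n b \<in> Vminus i n"
      using that by (auto simp: Vminus_eq Vplus_eq doubleton_eq_iff)
    then show False using Vminus_Vplus_disjoint[OF i, of n] by blast
  qed
  have "energy r i n u = (\<Sum>x\<in>Vminus i n \<union> Vplus i n. \<Sum>y\<in>Vminus i n \<union> Vplus i n. g x y)"
    unfolding energy_def V_def g_def ..
  also have "\<dots> = 2 * (\<Sum>x\<in>Vminus i n. \<Sum>y\<in>Vplus i n. g x y)"
  proof (rule sum_sum_union_bipartite)
    show "g x y = g y x" for x y
      unfolding g_def by (simp add: jker_commute power2_commute)
  qed (use Vminus_Vplus_disjoint[OF i] no_wire in \<open>auto simp: Vminus_eq Vplus_eq g_def jker_def\<close>)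
  finally show ?thesis
    using i by (simp add: g_def Vminus_eq Vplus_eq sum.reindex inj_on_left_point inj_on_right_point)
qed

lemma left_point_tendsto: "(\<lambda>i. left_point i n a) \<longlonglongrightarrow> 0"
proof -
  have "(\<lambda>i. real a / 2 ^ n * inverse (real i)) \<longlonglongrightarrow> 0"
    by (rule tendsto_mult_right_zero[OF lim_inverse_n])
  then show ?thesis by (simp add: left_point_def field_simps)
qed

lemma right_point_tendsto: "(\<lambda>i. right_point i n b) \<longlonglongrightarrow> 1"
proof -
  have "(\<lambda>i. 1 - left_point i n b) \<longlonglongrightarrow> 1 - 0"
    by (intro tendsto_intros left_point_tendsto)
  then show ?thesis by (simp add: right_point_def left_point_def)
qed

lemma eventually_points_in_Vbar:
  assumes "i0 > 0" "a < 2 ^ n" "b < 2 ^ n"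
  shows "\<forall>\<^sub>F i in sequentially. left_point i n a \<in> Vbar i0 \<and> right_point i n b \<in> Vbar i0"
  using eventually_ge_at_top[of i0]
proof eventually_elim
  case (elim i)
  then have i: "i > 0" and "1 / real i \<le> 1 / real i0" using assms(1) by (simp_all add: frac_le)
  then have "left_point i n a \<in> {0 .. 1 / real i0}" "right_point i n b \<in> {1 - 1 / real i0 .. 1}"
    using left_point_bounds[OF i assms(2)] right_point_bounds[OF i assms(3)] by auto
  then show ?case by (simp add: Vbar_def)
qed

lemma continuous_on_Vbar_tendsto_endpoints:
  assumes u: "continuous_on (Vbar i0) u" and "i0 > 0" "a < 2 ^ n" "b < 2 ^ n"
  shows "(\<lambda>i. u (left_point i n a)) \<longlonglongrightarrow> u 0" "(\<lambda>i. u (right_point i n b)) \<longlonglongrightarrow> u 1"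
  using eventually_points_in_Vbar[OF assms(2-4)]
  by (auto simp: Vbar_def intro!: continuous_on_tendsto_compose[OF u left_point_tendsto]
      continuous_on_tendsto_compose[OF u right_point_tendsto] elim: eventually_mono)

lemma scaled_jker_tendsto:
  fixes p :: real
  assumes bounds: "\<And>i x y. i > 2 \<Longrightarrow> {x, y} \<in> wires i n \<Longrightarrow>
        lam i * \<bar>x - y\<bar> powr p \<le> jker r i n x y \<and> jker r i n x y \<le> Lam i * \<bar>x - y\<bar> powr p"
    and lamlim: "(\<lambda>i. lam i / real i ^ 2) \<longlonglongrightarrow> 1"
    and Lamlim: "(\<lambda>i. Lam i / real i ^ 2) \<longlonglongrightarrow> 1"
    and ab: "a < 2 ^ n" "b < 2 ^ n"
  shows "(\<lambda>i. jker r i n (left_point i n a) (right_point i n b) * mu i n * mu i n) \<longlonglongrightarrow> 1 / 4 ^ n"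
proof -
  define J where "J i = jker r i n (left_point i n a) (right_point i n b)" for i
  define d where "d i = \<bar>left_point i n a - right_point i n b\<bar> powr p" for i
  have "d \<longlonglongrightarrow> \<bar>0 - 1\<bar> powr p"
    unfolding d_def by (intro tendsto_intros left_point_tendsto right_point_tendsto) simp
  then have d: "d \<longlonglongrightarrow> 1" by simp
  have mu: "mu i n * mu i n = 1 / real i ^ 2 / 4 ^ n" for i
    by (simp add: mu_def power2_eq_square power_mult_distrib[symmetric])
  have "\<forall>\<^sub>F i in sequentially. lam i / real i ^ 2 * d i / 4 ^ n \<le> J i * mu i n * mu i n
      \<and> J i * mu i n * mu i n \<le> Lam i / real i ^ 2 * d i / 4 ^ n"
    using eventually_gt_at_top[of 2]
  proof eventually_elim
    case (elim i)
    then have "{left_point i n a, right_point i n b} \<in> wires i n"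
      using ab by (auto simp: wires_eq)
    then have "lam i * d i \<le> J i \<and> J i \<le> Lam i * d i"
      using bounds[OF elim] by (simp add: J_def d_def)
    moreover have "J i * mu i n * mu i n = J i / real i ^ 2 / 4 ^ n"
      by (simp add: mu mult.assoc)
    ultimately show ?case by (auto simp: divide_right_mono)
  qed
  moreover have "(\<lambda>i. lam i / real i ^ 2 * d i / 4 ^ n) \<longlonglongrightarrow> 1 * 1 / 4 ^ n"
    by (intro tendsto_intros lamlim d) simp
  moreover have "(\<lambda>i. Lam i / real i ^ 2 * d i / 4 ^ n) \<longlonglongrightarrow> 1 * 1 / 4 ^ n"
    by (intro tendsto_intros Lamlim d) simp
  ultimately show ?thesis
    unfolding J_def[symmetric] by (auto intro: tendsto_sandwich elim: eventually_mono)
qed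

theorem lemma6p3:
  fixes r :: "nat \<Rightarrow> ekind \<Rightarrow> real" and n :: nat and s :: real
    and lam Lam :: "nat \<Rightarrow> real" and u :: "real \<Rightarrow> real" and i0 :: nat
  assumes r: "admissible_weights r"
    and s: "0 < s" "s < 1"
    and lampos: "\<And>i. i > 2 \<Longrightarrow> 0 < lam i \<and> lam i \<le> Lam i"
    and bounds: "\<And>i m x y. i > 2 \<Longrightarrow> {x, y} \<in> wires i m \<Longrightarrow>
        lam i * \<bar>x - y\<bar> powr (-1 - 2*s) \<le> jker r i m x y \<and>
        jker r i m x y \<le> Lam i * \<bar>x - y\<bar> powr (-1 - 2*s)"
    and lamlim: "(\<lambda>i. lam i / real i ^ 2) \<longlonglongrightarrow> 1"
    and Lamlim: "(\<lambda>i. Lam i / real i ^ 2) \<longlonglongrightarrow> 1"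
    and i0: "i0 > 2"
    and u: "continuous_on (Vbar i0) u"
  shows "(\<lambda>i. energy r i n u) \<longlonglongrightarrow> 2 * (u 0 - u 1)^2"
proof -
  define contrib where "contrib i a b = (u (left_point i n a) - u (right_point i n b))^2
    * (jker r i n (left_point i n a) (right_point i n b) * mu i n * mu i n)" for i a b
  have "(\<lambda>i. contrib i a b) \<longlonglongrightarrow> (u 0 - u 1)^2 * (1 / 4 ^ n)" if "a < 2 ^ n" "b < 2 ^ n" for a b
  proof -
    have "i0 > 0" using i0 by simp
    from continuous_on_Vbar_tendsto_endpoints[OF u this that]
    show ?thesis
      unfolding contrib_def
      by (intro tendsto_mult tendsto_power tendsto_diff scaled_jker_tendsto[OF bounds lamlim Lamlim that])
  qed
  then have "(\<lambda>i. 2 * (\<Sum>a<2 ^ n. \<Sum>b<2 ^ n. contrib i a b))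
      \<longlonglongrightarrow> 2 * (\<Sum>a<(2::nat) ^ n. \<Sum>b<(2::nat) ^ n. (u 0 - u 1)^2 * (1 / 4 ^ n))"
    by (intro tendsto_intros) auto
  also have "(\<Sum>a<(2::nat) ^ n. \<Sum>b<(2::nat) ^ n. (u 0 - u 1)^2 * (1 / 4 ^ n)) = (u 0 - u 1)^2"
  proof -
    have "(2::real) ^ n * 2 ^ n = 4 ^ n" by (simp add: power_mult_distrib[symmetric])
    then show ?thesis by (simp add: mult.assoc[symmetric])
  qed
  finally have "(\<lambda>i. 2 * (\<Sum>a<2 ^ n. \<Sum>b<2 ^ n. contrib i a b)) \<longlonglongrightarrow> 2 * (u 0 - u 1)^2" .
  moreover have "\<forall>\<^sub>F i in sequentially. 2 * (\<Sum>a<2 ^ n. \<Sum>b<2 ^ n. contrib i a b) = energy r i n u"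
    using eventually_gt_at_top[of 2]
    by eventually_elim (simp add: energy_eq_wire_sum contrib_def mult.assoc)
  ultimately show ?thesis by (rule Lim_transform_eventually)
qed

end
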